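(* Let $\mathcal{I}=\{(i\mid A_i): i\in[m]\}$ be an index coding instance. Then $$\beta(\mathcal{I})\le \beta_{\text{P-UMCD}}(\mathcal{I}):=\min\sum_{j\in[n]}\beta_{\text{UMCD}}(M_j),$$ where the minimum is over all partitions of $[m]$ into pairwise disjoint nonempty sets $M_1,\dots,M_n$ ($n\le m$) with $M_1\cup\dots\cup M_n=[m]$.
   Context: Index coding: a server holds messages $x_i=(x_i^1,\dots,x_i^t)\in\mathbb{F}_q^t$, $i\in[m]$; receiver $i$ wants $x_i$ and knows $\{x_j: j\in A_i\}$ where $A_i\subseteq[m]\setminus\{i\}$. A $(t,r)$ index code consists of an encoding map $\phi:\mathbb{F}_q^{mt}\to\mathbb{F}_q^{r}$ and decoders $\psi_i:\mathbb{F}_q^r\times\mathbb{F}_q^{|A_i|t}\to\mathbb{F}_q^t$ with $\psi_i(\phi(x),(x_j)_{j\in A_i})=x_i$ for all messages and all $i$; its rate is $r/t$, and $\beta(\mathcal{I})$ is the infimum of $r/t$ over all $t$ and all $(t,r)$ index codes (over finite fields). For $M\subseteq[m]$, the subinstance $M$ is the instance with receiver set $M$ and side information $A_i\cap M$. $B_i=[m]\setminus(A_i\cup\{i\})$ (within a subinstance, relative to $M$). For a $0/1$ matrix $\boldsymbol{G}$, $\boldsymbol{G}_{[k]}^L$ is the submatrix of its first $k$ rows and columns in $L$; $\mathrm{mcm}(\boldsymbol{G})$ is the maximum number of $1$-entries no two in a common row or column (0 if no columns). UMCD algorithm on an instance: $N=$ all receivers, $k=0$; while $N\ne\emptyset$: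 $k\leftarrow k+1$; pick $w\in N$ minimizing $|A_w|$ over $N$ (arbitrary tie-breaking); set row $k$ of $\boldsymbol{G}$ to the indicator of $\{w\}\cup A_w$; remove $w$ from $N$; remove every $i\in N$ with $\mathrm{mcm}(\boldsymbol{G}_{[k]}^{\{i\}\cup B_i})=\mathrm{mcm}(\boldsymbol{G}_{[k]}^{B_i})+1$; output $\beta_{\text{UMCD}}=k$. $\beta_{\text{UMCD}}(M)$ is the output of (a fixed execution of) this algorithm on subinstance $M$. *)

theory Defs
  imports Complex_Main "HOL-Algebra.Ring" "HOL-Library.FuncSet" "HOL-Library.Disjoint_Sets"
begin

(* Receivers are natural numbers; an instance is given by a receiver set N and
   side-information map A (receiver i knows x_j for j \<in> A i \<inter> N).
   A finite field is represented (up to isomorphism) as a HOL-Algebra field with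
   a finite carrier of natural numbers. *)

definition msgs :: "nat ring \<Rightarrow> nat set \<Rightarrow> nat \<Rightarrow> (nat \<Rightarrow> nat \<Rightarrow> nat) set" where
  "msgs F N t = (N \<rightarrow>\<^sub>E ({..<t} \<rightarrow>\<^sub>E carrier F))"

(* (t,r) index code over F for the instance (N, A):
   encoder phi : F^{|N| t} -> F^r, decoders psi i : F^r x F^{|A_i| t} -> F^t *)
definition is_index_code ::
  "nat ring \<Rightarrow> (nat \<Rightarrow> nat set) \<Rightarrow> nat set \<Rightarrow> nat \<Rightarrow> nat \<Rightarrow> bool" where
  "is_index_code F A N t r \<longleftrightarrow>
     (\<exists>(\<phi> :: (nat \<Rightarrow> nat \<Rightarrow> nat) \<Rightarrow> (nat \<Rightarrow> nat))
        (\<psi> :: nat \<Rightarrow> (nat \<Rightarrow> nat) \<Rightarrow> (nat \<Rightarrow> nat \<Rightarrow> nat) \<Rightarrow> (nat \<Rightarrow> nat)).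
        (\<forall>x\<in>msgs F N t. \<phi> x \<in> ({..<r} \<rightarrow>\<^sub>E carrier F)) \<and>
        (\<forall>i\<in>N. \<forall>x\<in>msgs F N t. \<psi> i (\<phi> x) (restrict x (A i \<inter> N)) = x i))"

definition beta :: "(nat \<Rightarrow> nat set) \<Rightarrow> nat set \<Rightarrow> real" where
  "beta A N = Inf {real r / real t | t r. t > 0 \<and>
      (\<exists>F :: nat ring. field F \<and> finite (carrier F) \<and> is_index_code F A N t r)}"

(* A 0/1 matrix is a list of rows, each row given by the set of columns holding a 1.
   mcm rows L: maximum number of 1-entries in columns L, no two sharing a row or column. *)
definition mcm :: "nat set list \<Rightarrow> nat set \<Rightarrow> nat" where
  "mcm rows L = Max {card E | E. E \<subseteq> {(a, c). a < length rows \<and> c \<in> L \<and> c \<in> rows ! a}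
                                   \<and> inj_on fst E \<and> inj_on snd E}"

definition Bset :: "(nat \<Rightarrow> nat set) \<Rightarrow> nat set \<Rightarrow> nat \<Rightarrow> nat set" where
  "Bset A M i = M - (A i \<union> {i})"

(* umcd_exec A M N rows k: from state (remaining receivers N, matrix rows so far),
   some execution of UMCD on subinstance M terminates with output k. *)
inductive umcd_exec :: "(nat \<Rightarrow> nat set) \<Rightarrow> nat set \<Rightarrow> nat set \<Rightarrow> nat set list \<Rightarrow> nat \<Rightarrow> bool"
  for A :: "nat \<Rightarrow> nat set" and M :: "nat set" where
  stop: "umcd_exec A M {} rows (length rows)"
| step: "\<lbrakk> N \<noteq> {}; w \<in> N; \<forall>v\<in>N. card (A w \<inter> M) \<le> card (A v \<inter> M);
           rows' = rows @ [insert w (A w \<inter> M)];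
           umcd_exec A M ((N - {w}) - {i \<in> N - {w}.
               mcm rows' (insert i (Bset A M i)) = mcm rows' (Bset A M i) + 1}) rows' k \<rbrakk>
         \<Longrightarrow> umcd_exec A M N rows k"

definition umcd_output :: "(nat \<Rightarrow> nat set) \<Rightarrow> nat set \<Rightarrow> nat \<Rightarrow> bool" where
  "umcd_output A M k \<longleftrightarrow> umcd_exec A M M [] k"

end

theory Submission
  imports Defs "Jordan_Normal_Form.Determinant" "HOL-Library.Nat_Bijection"
begin

text \<open>
  Each block M of the partition is served on its own, with one transmission per row of the
  0/1 matrix that UMCD builds on M. A message in F_2^t is read as a t-bit number X_c, and row j
  is sent in binary as the integer sum of w_jc X_c over its columns c, with the doubly
  exponential weights w_jc = 2^(2^<j,c>). In the Leibniz expansion of a square submatrix of the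
  weighted matrix, distinct permutations then contribute distinct powers of 2, so a submatrix
  supported on a perfect matching is nonsingular, while one whose columns admit no perfect
  matching is singular. UMCD removes receiver i once adding column i to B_i raises the maximum
  matching by one; expanding a determinant along the column of i then shows that column i is
  not in the span of the columns in B_i, so receiver i recovers X_i from the transmissions and
  its side information. Each transmission costs t + O(1) bits, so the rate tends to the sum of
  the UMCD outputs as t grows.
\<close>

lemma sum_powers_of_2_less:
  assumes "finite S" "\<forall>d \<in> S. d < n"
  shows "(\<Sum>d \<in> S. (2::nat) ^ d) < 2 ^ n"
proof -
  have "(\<Sum>d \<in> S. (2::nat) ^ d) \<le> (\<Sum>d \<in> {q. q < n}. 2 ^ d)"
    using assms by (intro sum_mono2) auto
  also have "\<dots> = 2 ^ n - 1"
    by (rule mask_eq_sum_exp[symmetric])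
  also have "\<dots> < 2 ^ n"
    by simp
  finally show ?thesis .
qed

lemma signed_sum_powers_of_2_neq_0:
  fixes s :: "'b \<Rightarrow> int" and d :: "'b \<Rightarrow> nat"
  assumes S: "finite S" "S \<noteq> {}" and d: "inj_on d S" and s: "\<forall>x \<in> S. \<bar>s x\<bar> = 1"
  shows "(\<Sum>x \<in> S. s x * 2 ^ d x) \<noteq> 0"
proof
  assume sum0: "(\<Sum>x \<in> S. s x * 2 ^ d x) = 0"
  have "Max (d ` S) \<in> d ` S"
    using S by simp
  then obtain x0 where x0: "x0 \<in> S" "d x0 = Max (d ` S)"
    by (metis imageE)
  have less: "\<forall>y \<in> d ` (S - {x0}). y < d x0"
  proof
    fix y assume "y \<in> d ` (S - {x0})"
    then obtain x where x: "x \<in> S" "x \<noteq> x0" "y = d x"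
      by blast
    then have "d x \<le> d x0"
      using x0(2) S(1) by simp
    moreover have "d x \<noteq> d x0"
      using inj_onD[OF d] x x0(1) by blast
    ultimately show "y < d x0"
      using x(3) by simp
  qed
  have "\<bar>\<Sum>x \<in> S - {x0}. s x * 2 ^ d x\<bar> \<le> (\<Sum>x \<in> S - {x0}. \<bar>s x * 2 ^ d x\<bar>)"
    by (rule sum_abs)
  also have "\<dots> = (\<Sum>x \<in> S - {x0}. 2 ^ d x)"
    using s by (intro sum.cong) (auto simp: abs_mult)
  also have "\<dots> = int (\<Sum>y \<in> d ` (S - {x0}). 2 ^ y)"
    using inj_on_subset[OF d, of "S - {x0}"] by (simp add: sum.reindex)
  also have "\<dots> < int (2 ^ d x0)"
    unfolding of_nat_less_iff by (rule sum_powers_of_2_less) (use S(1) less in auto)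
  finally have "\<bar>\<Sum>x \<in> S - {x0}. s x * 2 ^ d x\<bar> < \<bar>s x0 * 2 ^ d x0\<bar>"
    using s x0(1) by (simp add: abs_mult)
  moreover have "s x0 * 2 ^ d x0 + (\<Sum>x \<in> S - {x0}. s x * 2 ^ d x) = 0"
    using sum0 sum.remove[OF S(1) x0(1), of "\<lambda>x. s x * 2 ^ d x"] by simp
  ultimately show False
    by linarith
qed

lemma sum_powers_of_2_inj:
  assumes "finite S" "finite T" "(\<Sum>d \<in> S. (2::nat) ^ d) = (\<Sum>d \<in> T. 2 ^ d)"
  shows "S = T"
proof (rule ccontr)
  assume "S \<noteq> T"
  define s where "s d = (if d \<in> S then 1 else - 1 :: int)" for d
  have "(\<Sum>d \<in> S - T. s d * 2 ^ d) + (\<Sum>d \<in> T - S. s d * 2 ^ d)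
      = (\<Sum>d \<in> S. (2::int) ^ d) - (\<Sum>d \<in> T. 2 ^ d)"
    using assms(1,2) sum.union_diff2[of S T "\<lambda>d. (2::int) ^ d"]
    by (simp add: s_def sum_negf sum.Int_Diff[of S _ T] sum.Int_Diff[of T _ S] Int_commute)
  also have "\<dots> = 0"
    using arg_cong[OF assms(3), of int] by simp
  finally have "(\<Sum>d \<in> (S - T) \<union> (T - S). s d * 2 ^ d) = 0"
    using assms(1,2) by (subst sum.union_disjoint) auto
  moreover have "(S - T) \<union> (T - S) \<noteq> {}"
    using \<open>S \<noteq> T\<close> by blast
  moreover have "\<forall>d. \<bar>s d\<bar> = 1"
    by (simp add: s_def)
  ultimately show False
    using signed_sum_powers_of_2_neq_0[of "(S - T) \<union> (T - S)" id s] assms(1,2) by auto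
qed

lemma det_mat_leibniz:
  "det (mat n n f) = (\<Sum>\<pi> | \<pi> permutes {0..<n}. signof \<pi> * (\<Prod>a = 0..<n. f (a, \<pi> a)))"
proof -
  have "(\<Prod>a = 0..<n. mat n n f $$ (a, \<pi> a)) = (\<Prod>a = 0..<n. f (a, \<pi> a))"
    if "\<pi> permutes {0..<n}" for \<pi>
    using permutes_in_image[OF that] by (intro prod.cong) auto
  then show ?thesis
    by (simp add: det_def'[of _ n])
qed

lemma det_linear_col:
  fixes g :: "nat \<Rightarrow> 'c \<Rightarrow> 'a::comm_ring_1"
  assumes "p < n"
  shows "det (mat n n (\<lambda>(a, b). if b = p then \<Sum>c \<in> S. lam c * g a c else h a b)) =
    (\<Sum>c \<in> S. lam c * det (mat n n (\<lambda>(a, b). if b = p then g a c else h a b)))"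
proof -
  have "(\<Prod>a = 0..<n. if \<pi> a = p then \<Sum>c \<in> S. lam c * g a c else h a (\<pi> a)) =
      (\<Sum>c \<in> S. lam c * (\<Prod>a = 0..<n. if \<pi> a = p then g a c else h a (\<pi> a)))"
    if \<pi>: "\<pi> permutes {0..<n}" for \<pi>
  proof -
    obtain a0 where a0: "a0 < n" "\<pi> a0 = p"
      using permutes_surj[OF \<pi>] assms by (metis atLeastLessThan_iff permutes_image \<pi> imageE zero_le)
    have "\<pi> a \<noteq> p" if "a \<noteq> a0" for a
      using a0(2) permutes_inj[OF \<pi>] that by (auto dest: injD)
    then have "(\<Prod>a \<in> {0..<n} - {a0}. if \<pi> a = p then u a else h a (\<pi> a)) =
        (\<Prod>a \<in> {0..<n} - {a0}. h a (\<pi> a))" for u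
      by (intro prod.cong) auto
    then have "(\<Prod>a = 0..<n. if \<pi> a = p then u a else h a (\<pi> a)) =
        u a0 * (\<Prod>a \<in> {0..<n} - {a0}. h a (\<pi> a))" for u
      using prod.remove[of "{0..<n}" a0 "\<lambda>a. if \<pi> a = p then u a else h a (\<pi> a)"] a0
      by simp
    then show ?thesis
      by (simp add: sum_distrib_left sum_distrib_right mult.assoc)
  qed
  then have "det (mat n n (\<lambda>(a, b). if b = p then \<Sum>c \<in> S. lam c * g a c else h a b)) =
      (\<Sum>\<pi> | \<pi> permutes {0..<n}. \<Sum>c \<in> S. lam c *
        (signof \<pi> * (\<Prod>a = 0..<n. if \<pi> a = p then g a c else h a (\<pi> a))))"
    by (simp add: det_mat_leibniz sum_distrib_left mult.left_commute)
  also have "\<dots> = (\<Sum>c \<in> S. lam c * det (mat n n (\<lambda>(a, b). if b = p then g a c else h a b)))"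
    by (subst sum.swap) (simp add: det_mat_leibniz sum_distrib_left)
  finally show ?thesis .
qed

lemma permutes_eq_if_image_eq:
  fixes e :: "nat \<Rightarrow> nat \<Rightarrow> 'b"
  assumes e: "inj_on (\<lambda>(a, b). e a b) ({0..<n} \<times> {0..<n})"
    and perm: "\<pi> permutes {0..<n}" "\<sigma> permutes {0..<n}"
    and image_eq: "(\<lambda>a. e a (\<pi> a)) ` {0..<n} = (\<lambda>a. e a (\<sigma> a)) ` {0..<n}"
  shows "\<pi> = \<sigma>"
proof
  fix a
  show "\<pi> a = \<sigma> a"
  proof (cases "a < n")
    case True
    then have "e a (\<pi> a) \<in> (\<lambda>a. e a (\<sigma> a)) ` {0..<n}"
      unfolding image_eq[symmetric] by (intro rev_image_eqI[of a]) simp_all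
    then obtain a' where "a' < n" "e a (\<pi> a) = e a' (\<sigma> a')"
      by auto
    then have "(a, \<pi> a) = (a', \<sigma> a')"
      using True permutes_in_image[OF perm(1)] permutes_in_image[OF perm(2)]
      by (intro inj_onD[OF e]) simp_all
    then show ?thesis
      by auto
  next
    case False
    then show ?thesis
      using permutes_not_in[OF perm(1)] permutes_not_in[OF perm(2)] by simp
  qed
qed

lemma det_generic_weights_neq_0:
  fixes e :: "nat \<Rightarrow> nat \<Rightarrow> nat"
  assumes e: "inj_on (\<lambda>(a, b). e a b) ({0..<n} \<times> {0..<n})" and diag: "\<forall>a < n. S a a"
  shows "det (mat n n (\<lambda>(a, b). if S a b then (2::int) ^ 2 ^ e a b else 0)) \<noteq> 0"
proof -
  define Pp where "Pp = {\<pi>. \<pi> permutes {0..<n} \<and> (\<forall>a < n. S a (\<pi> a))}"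
  define ex where "ex \<pi> = (\<Sum>a = 0..<n. 2 ^ e a (\<pi> a) :: nat)" for \<pi>
  have fin: "finite {\<pi>. \<pi> permutes {0..<n}}" "Pp \<subseteq> {\<pi>. \<pi> permutes {0..<n}}"
    by (auto simp: Pp_def finite_permutations)
  have leibniz_term: "(\<Prod>a = 0..<n. if S a (\<pi> a) then (2::int) ^ 2 ^ e a (\<pi> a) else 0) =
      (if \<pi> \<in> Pp then 2 ^ ex \<pi> else 0)" if "\<pi> permutes {0..<n}" for \<pi>
    using that by (auto simp: Pp_def ex_def power_sum)
  have ex_image: "ex \<pi> = (\<Sum>d \<in> (\<lambda>a. e a (\<pi> a)) ` {0..<n}. 2 ^ d)" if \<pi>: "\<pi> permutes {0..<n}" for \<pi>
  proof -
    have "inj_on (\<lambda>a. e a (\<pi> a)) {0..<n}"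
    proof (rule inj_onI)
      fix a a' assume "a \<in> {0..<n}" "a' \<in> {0..<n}" "e a (\<pi> a) = e a' (\<pi> a')"
      then show "a = a'"
        using inj_onD[OF e, of "(a, \<pi> a)" "(a', \<pi> a')"] permutes_in_image[OF \<pi>] by simp
    qed
    then show ?thesis
      by (simp add: ex_def sum.reindex)
  qed
  have ex_inj: "inj_on ex Pp"
  proof (rule inj_onI)
    fix \<pi> \<sigma> assume "\<pi> \<in> Pp" "\<sigma> \<in> Pp" "ex \<pi> = ex \<sigma>"
    then have perm: "\<pi> permutes {0..<n}" "\<sigma> permutes {0..<n}" and "ex \<pi> = ex \<sigma>"
      by (simp_all add: Pp_def)
    then have "(\<lambda>a. e a (\<pi> a)) ` {0..<n} = (\<lambda>a. e a (\<sigma> a)) ` {0..<n}"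
      by (intro sum_powers_of_2_inj) (simp_all add: ex_image)
    then show "\<pi> = \<sigma>"
      by (rule permutes_eq_if_image_eq[OF e perm])
  qed
  have "det (mat n n (\<lambda>(a, b). if S a b then (2::int) ^ 2 ^ e a b else 0)) =
      (\<Sum>\<pi> | \<pi> permutes {0..<n}. signof \<pi> * (if \<pi> \<in> Pp then 2 ^ ex \<pi> else 0))"
    unfolding det_mat_leibniz
    by (intro sum.cong refl) (simp only: mem_Collect_eq case_prod_conv leibniz_term)
  also have "\<dots> = (\<Sum>\<pi> \<in> Pp. signof \<pi> * 2 ^ ex \<pi>)"
    by (simp add: sum.mono_neutral_cong_right[OF fin])
  also have "\<dots> \<noteq> 0"
  proof (rule signed_sum_powers_of_2_neq_0[OF _ _ ex_inj])
    show "finite Pp"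
      using fin finite_subset by blast
    have "id \<in> Pp"
      using diag by (simp add: Pp_def permutes_id)
    then show "Pp \<noteq> {}"
      by blast
  qed (simp add: sign_def)
  finally show ?thesis .
qed

definition matchings :: "nat set list \<Rightarrow> nat set \<Rightarrow> (nat \<times> nat) set set" where
  "matchings rs L = {E. E \<subseteq> {(a, c). a < length rs \<and> c \<in> L \<and> c \<in> rs ! a}
                          \<and> inj_on fst E \<and> inj_on snd E}"

lemma mcm_eq_Max_matchings: "mcm rs L = Max (card ` matchings rs L)"
  unfolding mcm_def matchings_def by (simp add: image_Collect)

lemma finite_matchings: "finite L \<Longrightarrow> finite (matchings rs L)"
  unfolding matchings_def
  by (rule finite_subset[of _ "Pow ({..<length rs} \<times> L)"]) auto

lemma finite_matching: "finite L \<Longrightarrow> E \<in> matchings rs L \<Longrightarrow> finite E"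
  unfolding matchings_def
  by (rule finite_subset[of _ "{..<length rs} \<times> L"]) auto

lemma card_le_mcm: "finite L \<Longrightarrow> E \<in> matchings rs L \<Longrightarrow> card E \<le> mcm rs L"
  unfolding mcm_eq_Max_matchings by (simp add: finite_matchings)

lemma mcm_attained: "finite L \<Longrightarrow> \<exists>E \<in> matchings rs L. card E = mcm rs L"
proof -
  assume "finite L"
  moreover have "{} \<in> matchings rs L"
    by (simp add: matchings_def)
  ultimately have "mcm rs L \<in> card ` matchings rs L"
    unfolding mcm_eq_Max_matchings by (intro Max_in) (auto simp: finite_matchings)
  then show ?thesis
    by auto
qed

lemma matchings_cols_mono:
  assumes E: "E \<in> matchings rs L" and cols: "snd ` E \<subseteq> L'"
  shows "E \<in> matchings rs L'"
proof -
  have "x \<in> {(a, c). a < length rs \<and> c \<in> L' \<and> c \<in> rs ! a}" if "x \<in> E" for x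
    using E cols that by (cases x) (force simp: matchings_def)
  then show ?thesis
    using E subsetI[of E] by (simp add: matchings_def)
qed

lemma matching_enumeration:
  assumes "finite L" and E: "E \<in> matchings rs L"
  obtains \<rho> \<tau> where "inj_on \<rho> {0..<card E}" "inj_on \<tau> {0..<card E}"
    "\<forall>a < card E. \<rho> a < length rs \<and> \<tau> a \<in> L \<and> \<tau> a \<in> rs ! \<rho> a"
    "\<tau> ` {0..<card E} = snd ` E"
proof -
  have cells: "E \<subseteq> {(a, c). a < length rs \<and> c \<in> L \<and> c \<in> rs ! a}"
    and inj: "inj_on fst E" "inj_on snd E"
    using E by (simp_all add: matchings_def)
  obtain e where e: "bij_betw e {0..<card E} E"
    using ex_bij_betw_nat_finite[OF finite_matching[OF assms]] by blast
  have "inj_on (fst \<circ> e) {0..<card E}" "inj_on (snd \<circ> e) {0..<card E}"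
    using e inj by (simp_all add: bij_betw_def comp_inj_on)
  moreover have "\<forall>a < card E. (fst \<circ> e) a < length rs \<and> (snd \<circ> e) a \<in> L \<and> (snd \<circ> e) a \<in> rs ! (fst \<circ> e) a"
  proof (intro allI impI)
    fix a assume "a < card E"
    then have "e a \<in> E"
      using bij_betwE[OF e] by simp
    then have "e a \<in> {(a, c). a < length rs \<and> c \<in> L \<and> c \<in> rs ! a}"
      using cells by (rule rev_subsetD)
    then show "(fst \<circ> e) a < length rs \<and> (snd \<circ> e) a \<in> L \<and> (snd \<circ> e) a \<in> rs ! (fst \<circ> e) a"
      by (cases "e a") simp
  qed
  moreover have "(snd \<circ> e) ` {0..<card E} = snd ` E"
    using bij_betw_imp_surj_on[OF e] by (metis image_comp)
  ultimately show ?thesis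
    by (rule that)
qed

definition mcm_gain :: "nat set list \<Rightarrow> nat set \<Rightarrow> nat \<Rightarrow> bool" where
  "mcm_gain rs B i \<longleftrightarrow> mcm rs (insert i B) = mcm rs B + 1"

lemma mcm_insert_le: "finite B \<Longrightarrow> mcm rs (insert w B) \<le> mcm rs B + 1"
proof -
  assume B: "finite B"
  obtain E where E: "E \<in> matchings rs (insert w B)" "card E = mcm rs (insert w B)"
    using mcm_attained B by blast
  have inj: "inj_on fst E" "inj_on snd E"
    using E(1) by (simp_all add: matchings_def)
  let ?E = "{e \<in> E. snd e \<noteq> w}"
  have "?E \<in> matchings rs B"
    using E(1) inj_on_subset[OF inj(1), of ?E] inj_on_subset[OF inj(2), of ?E]
    by (auto simp: matchings_def)
  then have "card ?E \<le> mcm rs B"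
    by (rule card_le_mcm[OF B])
  moreover have "card {e \<in> E. snd e = w} \<le> card {w}"
    using inj_on_subset[OF inj(2)] by (intro card_inj_on_le[of snd]) auto
  moreover have "card E = card (?E \<union> {e \<in> E. snd e = w})"
    by (rule arg_cong[where f = card]) auto
  ultimately show ?thesis
    using E(2) card_Un_le[of ?E "{e \<in> E. snd e = w}"] by simp
qed

lemma mcm_gain_append_row:
  assumes B: "finite B" and r: "w \<in> r" "r \<inter> B = {}"
  shows "mcm_gain (rs @ [r]) B w"
proof -
  obtain E where E: "E \<in> matchings (rs @ [r]) B" "card E = mcm (rs @ [r]) B"
    using mcm_attained B by blast
  have "w \<notin> B"
    using r by blast
  have "(length rs, w) \<notin> E" "length rs \<notin> fst ` E" "w \<notin> snd ` E"
    using E(1) r(2) \<open>w \<notin> B\<close> by (fastforce simp: matchings_def nth_append)+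
  then have "insert (length rs, w) E \<in> matchings (rs @ [r]) (insert w B)"
    using E(1) r(1) by (auto simp: matchings_def nth_append)
  then have "card E + 1 \<le> mcm (rs @ [r]) (insert w B)"
    using card_le_mcm[of "insert w B"] finite_matching[OF B E(1)] B \<open>(length rs, w) \<notin> E\<close> by fastforce
  then show ?thesis
    using mcm_insert_le[OF B, of "rs @ [r]" w] E(2) by (simp add: mcm_gain_def)
qed

lemma mcm_gain_obtain_matching:
  assumes B: "finite B" and gain: "mcm_gain rs B i"
  obtains \<rho> \<tau> p where "inj_on \<rho> {0..<Suc (mcm rs B)}" "inj_on \<tau> {0..<Suc (mcm rs B)}"
    "\<forall>a < Suc (mcm rs B). \<rho> a < length rs \<and> \<tau> a \<in> rs ! \<rho> a"
    "p < Suc (mcm rs B)" "\<tau> p = i" "\<forall>a < Suc (mcm rs B). a \<noteq> p \<longrightarrow> \<tau> a \<in> B"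
proof -
  define n where "n = Suc (mcm rs B)"
  obtain E where E: "E \<in> matchings rs (insert i B)" "card E = n"
    using mcm_attained[of "insert i B" rs] B gain by (auto simp: mcm_gain_def n_def)
  have "finite (insert i B)"
    using B by simp
  obtain \<rho> \<tau> where \<rho>\<tau>: "inj_on \<rho> {0..<n}" "inj_on \<tau> {0..<n}"
    and edge: "\<forall>a < n. \<rho> a < length rs \<and> \<tau> a \<in> insert i B \<and> \<tau> a \<in> rs ! \<rho> a"
    and cols: "\<tau> ` {0..<n} = snd ` E"
    by (rule matching_enumeration[OF \<open>finite (insert i B)\<close> E(1), unfolded E(2)])
  have "i \<in> \<tau> ` {0..<n}"
  proof (rule ccontr)
    assume "i \<notin> \<tau> ` {0..<n}"
    then have "snd ` E \<subseteq> B"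
      using edge unfolding cols[symmetric] by auto
    then have "card E \<le> mcm rs B"
      using matchings_cols_mono[OF E(1)] card_le_mcm[OF B] by blast
    then show False
      using E(2) n_def by simp
  qed
  then obtain p where p: "p < n" "\<tau> p = i"
    by auto
  have "\<tau> a \<in> B" if "a < n" "a \<noteq> p" for a
    using edge inj_onD[OF \<rho>\<tau>(2), of a p] p that by auto
  then show ?thesis
    using that[of \<rho> \<tau> p] \<rho>\<tau> edge p by (simp add: n_def)
qed

lemma det_eq_0_if_mcm_less:
  fixes G :: "nat \<Rightarrow> nat \<Rightarrow> 'a::comm_ring_1"
  assumes "finite B" "mcm rs B < n" and support: "\<forall>j c. G j c \<noteq> 0 \<longrightarrow> c \<in> rs ! j"
    and \<rho>: "inj_on \<rho> {0..<n}" "\<forall>a<n. \<rho> a < length rs" and h: "\<forall>b<n. h b \<in> B"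
  shows "det (mat n n (\<lambda>(a, b). G (\<rho> a) (h b))) = 0"
proof (cases "inj_on h {0..<n}")
  case False
  then obtain b1 b2 where "b1 < n" "b2 < n" "b1 \<noteq> b2" "h b1 = h b2"
    by (auto simp: inj_on_def)
  then show ?thesis
    by (intro det_identical_columns[of _ n b1 b2]) (auto intro!: eq_vecI)
next
  case True
  have "(\<Prod>a = 0..<n. G (\<rho> a) (h (\<pi> a))) = 0" if \<pi>: "\<pi> permutes {0..<n}" for \<pi>
  proof (rule ccontr)
    assume nonzero: "(\<Prod>a = 0..<n. G (\<rho> a) (h (\<pi> a))) \<noteq> 0"
    have edge: "h (\<pi> a) \<in> rs ! \<rho> a" if "a < n" for a
    proof -
      have "G (\<rho> a) (h (\<pi> a)) \<noteq> 0"
        using nonzero prod_zero[of "{0..<n}" "\<lambda>a. G (\<rho> a) (h (\<pi> a))"] that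
        by (metis atLeastLessThan_iff finite_atLeastLessThan zero_le)
      then show ?thesis
        using support by blast
    qed
    have \<pi>_lt: "\<pi> a < n" if "a < n" for a
      using permutes_in_image[OF \<pi>] that by simp
    define E where "E = (\<lambda>a. (\<rho> a, h (\<pi> a))) ` {0..<n}"
    have "inj_on (\<lambda>a. (\<rho> a, h (\<pi> a))) {0..<n}"
      using \<rho>(1) by (auto simp: inj_on_def)
    then have "card E = n"
      by (simp add: E_def card_image)
    moreover have "inj_on (\<lambda>a. h (\<pi> a)) {0..<n}"
      using comp_inj_on[OF permutes_inj_on[OF \<pi>], of h] True permutes_image[OF \<pi>] by (simp add: o_def)
    then have "E \<in> matchings rs B"
      using edge \<rho> h \<pi>_lt inj_on_imageI[of fst "\<lambda>a. (\<rho> a, h (\<pi> a))"]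
        inj_on_imageI[of snd "\<lambda>a. (\<rho> a, h (\<pi> a))"]
      by (auto simp: E_def matchings_def o_def)
    ultimately show False
      using card_le_mcm[OF assms(1)] assms(2) by fastforce
  qed
  then show ?thesis
    by (simp add: det_mat_leibniz)
qed

definition generic_weight :: "nat \<Rightarrow> nat \<Rightarrow> nat" where
  "generic_weight j c = 2 ^ 2 ^ prod_encode (j, c)"

definition weighted_entry :: "nat set list \<Rightarrow> nat \<Rightarrow> nat \<Rightarrow> int" where
  "weighted_entry rs j c = (if c \<in> rs ! j then int (generic_weight j c) else 0)"

lemma det_weighted_matching_neq_0:
  assumes \<rho>: "inj_on \<rho> {0..<n}" and \<tau>: "inj_on \<tau> {0..<n}" and edge: "\<forall>a < n. \<tau> a \<in> rs ! \<rho> a"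
  shows "det (mat n n (\<lambda>(a, b). weighted_entry rs (\<rho> a) (\<tau> b))) \<noteq> 0"
proof -
  have "inj_on (prod_encode \<circ> map_prod \<rho> \<tau>) ({0..<n} \<times> {0..<n})"
    using map_prod_inj_on[OF \<rho> \<tau>] inj_prod_encode by (rule comp_inj_on)
  then have "inj_on (\<lambda>(a, b). prod_encode (\<rho> a, \<tau> b)) ({0..<n} \<times> {0..<n})"
    by (simp add: case_prod_beta' o_def map_prod_def)
  then have "det (mat n n (\<lambda>(a, b). if \<tau> b \<in> rs ! \<rho> a
      then (2::int) ^ 2 ^ prod_encode (\<rho> a, \<tau> b) else 0)) \<noteq> 0"
    using edge by (intro det_generic_weights_neq_0[of "\<lambda>a b. prod_encode (\<rho> a, \<tau> b)"]) auto
  then show ?thesis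
    by (simp add: weighted_entry_def generic_weight_def cong: if_cong)
qed

lemma weighted_kernel_vanishes_at_gain:
  fixes Z :: "nat \<Rightarrow> int"
  assumes B: "finite B" and gain: "mcm_gain rs B i"
    and kernel: "\<forall>j < length rs. (\<Sum>c \<in> insert i B. weighted_entry rs j c * Z c) = 0"
  shows "Z i = 0"
proof -
  define n where "n = Suc (mcm rs B)"
  obtain \<rho> \<tau> p where \<rho>: "inj_on \<rho> {0..<n}" and \<tau>: "inj_on \<tau> {0..<n}"
    and edge: "\<forall>a < n. \<rho> a < length rs \<and> \<tau> a \<in> rs ! \<rho> a"
    and p: "p < n" "\<tau> p = i" and \<tau>_B: "\<forall>a < n. a \<noteq> p \<longrightarrow> \<tau> a \<in> B"
    by (rule mcm_gain_obtain_matching[OF B gain, folded n_def])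
  have "i \<notin> B"
    using gain by (auto simp: mcm_gain_def insert_absorb)
  define W where "W h = mat n n (\<lambda>(a, b). weighted_entry rs (\<rho> a) (h b))" for h
  have "det (W \<tau>) \<noteq> 0"
    unfolding W_def using \<rho> \<tau> edge by (intro det_weighted_matching_neq_0) auto
  have other_columns: "det (W (\<tau>(p := c))) = 0" if "c \<in> B" for c
    unfolding W_def
  proof (rule det_eq_0_if_mcm_less[OF B])
    show "\<forall>b < n. (\<tau>(p := c)) b \<in> B"
      using \<tau>_B that by simp
  qed (use edge \<rho> in \<open>auto simp: n_def weighted_entry_def\<close>)
  have replace_col: "mat n n (\<lambda>(a, b). if b = p then weighted_entry rs (\<rho> a) c
      else weighted_entry rs (\<rho> a) (\<tau> b)) = W (\<tau>(p := c))" for c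
    by (simp add: W_def fun_upd_def if_distrib[of "weighted_entry rs _"] cong: if_cong)
  \<comment> \<open>Column p of the second matrix below is zero by kernel; expanding it by linearity,
    only the term c = i survives.\<close>
  have "0 = det (mat n n (\<lambda>(a, b). if b = p then \<Sum>c\<in>{}. Z c * weighted_entry rs (\<rho> a) c
      else weighted_entry rs (\<rho> a) (\<tau> b)))"
    by (simp add: det_linear_col[OF p(1)])
  also have "\<dots> = det (mat n n (\<lambda>(a, b). if b = p then \<Sum>c \<in> insert i B. Z c * weighted_entry rs (\<rho> a) c
      else weighted_entry rs (\<rho> a) (\<tau> b)))"
    using kernel edge by (intro arg_cong[where f = det] eq_matI) (auto simp: mult.commute)
  also have "\<dots> = (\<Sum>c \<in> insert i B. Z c * det (W (\<tau>(p := c))))"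
    by (simp add: det_linear_col[OF p(1)] replace_col)
  also have "\<dots> = Z i * det (W \<tau>)"
    using B \<open>i \<notin> B\<close> other_columns p(2) by (simp add: fun_upd_triv[of \<tau> p, unfolded p(2)])
  finally show ?thesis
    using \<open>det (W \<tau>) \<noteq> 0\<close> by simp
qed

lemma mcm_gain_decodes:
  fixes u v :: "nat \<Rightarrow> nat"
  assumes M: "finite M" "i \<in> M" and rows: "\<forall>r \<in> set rs. r \<subseteq> M"
    and gain: "mcm_gain (take J rs) (Bset A M i) i"
    and sums: "\<forall>j < length rs. (\<Sum>c \<in> rs ! j. generic_weight j c * u c) =
                                (\<Sum>c \<in> rs ! j. generic_weight j c * v c)"
    and side: "\<forall>c \<in> A i \<inter> M. u c = v c"
  shows "u i = v i"
proof -
  define Z where "Z c = int (u c) - int (v c)" for c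
  have "Z i = 0"
  proof (rule weighted_kernel_vanishes_at_gain[OF _ gain])
    show "finite (Bset A M i)"
      using M(1) by (simp add: Bset_def)
    show "\<forall>j < length (take J rs). (\<Sum>c \<in> insert i (Bset A M i). weighted_entry (take J rs) j c * Z c) = 0"
    proof (intro allI impI)
      fix j assume j: "j < length (take J rs)"
      then have row: "rs ! j \<subseteq> M" "take J rs ! j = rs ! j"
        using rows by auto
      have "(\<Sum>c \<in> insert i (Bset A M i). weighted_entry (take J rs) j c * Z c) =
          (\<Sum>c \<in> M. weighted_entry rs j c * Z c)"
        using M side row(2) by (intro sum.mono_neutral_cong_left) (auto simp: Bset_def Z_def weighted_entry_def)
      also have "\<dots> = (\<Sum>c \<in> rs ! j. int (generic_weight j c) * Z c)"
        using M(1) row(1) by (intro sum.mono_neutral_cong_right) (auto simp: weighted_entry_def)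
      also have "\<dots> = int (\<Sum>c \<in> rs ! j. generic_weight j c * u c) -
          int (\<Sum>c \<in> rs ! j. generic_weight j c * v c)"
        by (simp add: Z_def algebra_simps sum_subtractf)
      also have "\<dots> = 0"
        using sums j by simp
      finally show "(\<Sum>c \<in> insert i (Bset A M i). weighted_entry (take J rs) j c * Z c) = 0" .
    qed
  qed
  then show ?thesis
    by (simp add: Z_def)
qed

lemma umcd_exec_rows:
  assumes "umcd_exec A M N rs k" "N \<subseteq> M" "finite M"
  shows "\<exists>rs'. length (rs @ rs') = k \<and> (\<forall>r \<in> set rs'. r \<subseteq> M) \<and>
           (\<forall>i\<in>N. \<exists>J. mcm_gain (take J (rs @ rs')) (Bset A M i) i)"
  using assms
proof (induction rule: umcd_exec.induct)
  case (stop rs)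
  show ?case
    by (intro exI[of _ "[]"]) simp
next
  case (step N w rs' rs k)
  let ?N' = "N - {w} - {i \<in> N - {w}. mcm rs' (insert i (Bset A M i)) = mcm rs' (Bset A M i) + 1}"
  obtain tail where tail: "length (rs' @ tail) = k" "\<forall>r \<in> set tail. r \<subseteq> M"
    "\<forall>i \<in> ?N'. \<exists>J. mcm_gain (take J (rs' @ tail)) (Bset A M i) i"
    using step.IH step.prems by blast
  have "w \<in> M"
    using step.hyps(2) step.prems(1) by blast
  have gain: "mcm_gain rs' (Bset A M i) i" if "i \<in> N" "i \<notin> ?N'" for i
  proof (cases "i = w")
    case True
    show ?thesis
      unfolding True step.hyps(4)
      by (rule mcm_gain_append_row) (use step.prems(2) in \<open>auto simp: Bset_def\<close>)
  next
    case False
    then show ?thesis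
      using that by (simp add: mcm_gain_def)
  qed
  have rows_eq: "rs' @ tail = rs @ insert w (A w \<inter> M) # tail"
    using step.hyps(4) by simp
  show ?case
  proof (intro exI[of _ "insert w (A w \<inter> M) # tail"] conjI ballI)
    show "length (rs @ insert w (A w \<inter> M) # tail) = k"
      using tail(1) step.hyps(4) by simp
    show "r \<subseteq> M" if "r \<in> set (insert w (A w \<inter> M) # tail)" for r
      using that tail(2) \<open>w \<in> M\<close> by auto
    show "\<exists>J. mcm_gain (take J (rs @ insert w (A w \<inter> M) # tail)) (Bset A M i) i" if "i \<in> N" for i
    proof (cases "i \<in> ?N'")
      case True
      then show ?thesis
        using tail(3) unfolding rows_eq by blast
    next
      case False
      then have "mcm_gain (take (length rs') (rs @ insert w (A w \<inter> M) # tail)) (Bset A M i) i"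
        using gain[OF that] step.hyps(4) by simp
      then show ?thesis ..
    qed
  qed
qed

definition decoding_rows :: "(nat \<Rightarrow> nat set) \<Rightarrow> nat set \<Rightarrow> nat set list \<Rightarrow> bool" where
  "decoding_rows A M rs \<longleftrightarrow>
     (\<forall>r \<in> set rs. r \<subseteq> M) \<and> (\<forall>i \<in> M. \<exists>J. mcm_gain (take J rs) (Bset A M i) i)"

lemma umcd_output_decoding_rows:
  assumes "umcd_output A M k" "finite M"
  shows "\<exists>rs. length rs = k \<and> decoding_rows A M rs"
  using umcd_exec_rows[of A M M "[]" k] assms by (simp add: umcd_output_def decoding_rows_def)

definition F2 :: "nat ring" where
  "F2 = \<lparr>partial_object.carrier = {0, 1}, monoid.mult = (\<lambda>a b. a * b), monoid.one = 1,
         ring.zero = 0, ring.add = (\<lambda>a b. (a + b) mod 2)\<rparr>"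

lemma carrier_F2 [simp]: "carrier F2 = {0, 1}"
  by (simp add: F2_def)

lemma field_F2: "field F2"
proof -
  have "cring F2"
  proof (rule cringI)
    show "abelian_group F2"
      by (rule abelian_groupI) (auto simp: F2_def)
    show "comm_monoid F2"
      by (rule comm_monoidI) (auto simp: F2_def)
  qed (auto simp: F2_def)
  then interpret cring F2 .
  show ?thesis
    by (rule cring_fieldI2) (auto simp: F2_def)
qed

definition bits_value :: "nat \<Rightarrow> (nat \<Rightarrow> nat) \<Rightarrow> nat" where
  "bits_value t v = (\<Sum>l \<in> {l. l < t \<and> v l = 1}. 2 ^ l)"

lemma bits_value_less: "bits_value t v < 2 ^ t"
  unfolding bits_value_def by (rule sum_powers_of_2_less) auto

lemma bits_value_inj:
  assumes "v \<in> {..<t} \<rightarrow>\<^sub>E {0, 1}" "v' \<in> {..<t} \<rightarrow>\<^sub>E {0, 1}" "bits_value t v = bits_value t v'"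
  shows "v = v'"
proof -
  have "{l. l < t \<and> v l = 1} = {l. l < t \<and> v' l = 1}"
    using assms(3) unfolding bits_value_def by (rule sum_powers_of_2_inj[rotated 2]) auto
  then have "v l = 1 \<longleftrightarrow> v' l = 1" if "l < t" for l
    using that by (auto simp: set_eq_iff)
  moreover have "v l \<in> {0, 1}" "v' l \<in> {0, 1}" if "l < t" for l
    using that PiE_mem[OF assms(1)] PiE_mem[OF assms(2)] by simp_all
  ultimately show ?thesis
    by (intro PiE_ext[OF assms(1,2)]) fastforce
qed

lemma eq_if_bit_blocks_eq:
  fixes u v :: "nat \<Rightarrow> nat"
  assumes small: "u q < 2 ^ L" "v q < 2 ^ L" and q: "q < K"
    and bits: "\<forall>n < K * L. bit (u (n div L)) (n mod L) \<longleftrightarrow> bit (v (n div L)) (n mod L)"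
  shows "u q = v q"
proof (rule bit_eqI)
  fix l
  show "bit (u q) l \<longleftrightarrow> bit (v q) l"
  proof (cases "l < L")
    case True
    have "q * L + l < Suc q * L"
      using True by simp
    also have "\<dots> \<le> K * L"
      using q by (intro mult_right_mono) auto
    finally show ?thesis
      using bits True by auto
  next
    case False
    have "take_bit L (u q) = u q" "take_bit L (v q) = v q"
      using small by (simp_all add: take_bit_nat_eq_self)
    then show ?thesis
      using False by (metis bit_take_bit_iff)
  qed
qed

lemma is_index_codeI:
  assumes enc: "\<forall>x \<in> msgs F N t. \<phi> x \<in> {..<r} \<rightarrow>\<^sub>E carrier F"
    and dec: "\<And>i x x'. \<lbrakk>i \<in> N; x \<in> msgs F N t; x' \<in> msgs F N t; \<phi> x = \<phi> x';
                restrict x (A i \<inter> N) = restrict x' (A i \<inter> N)\<rbrakk> \<Longrightarrow> x i = x' i"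
  shows "is_index_code F A N t r"
  unfolding is_index_code_def
proof (intro exI conjI ballI)
  show "\<phi> x \<in> {..<r} \<rightarrow>\<^sub>E carrier F" if "x \<in> msgs F N t" for x
    using enc that by blast
  fix i x assume i: "i \<in> N" and x: "x \<in> msgs F N t"
  let ?P = "\<lambda>v. \<exists>x' \<in> msgs F N t. \<phi> x' = \<phi> x \<and> restrict x' (A i \<inter> N) = restrict x (A i \<inter> N) \<and> x' i = v"
  have "?P (x i)"
    using x by blast
  then have "?P (SOME v. ?P v)"
    by (rule someI[of ?P])
  then show "(\<lambda>i y a. SOME v. \<exists>x' \<in> msgs F N t. \<phi> x' = y \<and> restrict x' (A i \<inter> N) = a \<and> x' i = v)
      i (\<phi> x) (restrict x (A i \<inter> N)) = x i"
    using dec[OF i _ x] by auto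
qed

lemma index_code_of_integer_transmissions:
  fixes Y :: "(nat \<Rightarrow> nat \<Rightarrow> nat) \<Rightarrow> 'q \<Rightarrow> nat"
  assumes T: "finite T" and small: "\<And>x q. q \<in> T \<Longrightarrow> Y x q < 2 ^ L"
    and dec: "\<And>i x x'. \<lbrakk>i \<in> N; x \<in> msgs F2 N t; x' \<in> msgs F2 N t; \<forall>q \<in> T. Y x q = Y x' q;
                restrict x (A i \<inter> N) = restrict x' (A i \<inter> N)\<rbrakk> \<Longrightarrow> x i = x' i"
  shows "is_index_code F2 A N t (card T * L)"
proof -
  obtain f where f: "bij_betw f {0..<card T} T"
    using ex_bij_betw_nat_finite[OF T] by blast
  define \<phi> where "\<phi> x = restrict (\<lambda>n. of_bool (bit (Y x (f (n div L))) (n mod L)) :: nat) {..<card T * L}"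
    for x :: "nat \<Rightarrow> nat \<Rightarrow> nat"
  show ?thesis
  proof (rule is_index_codeI[where \<phi> = \<phi>])
    show "\<forall>x \<in> msgs F2 N t. \<phi> x \<in> {..<card T * L} \<rightarrow>\<^sub>E carrier F2"
      by (simp add: \<phi>_def)
  next
    fix i x x' assume i: "i \<in> N" and x: "x \<in> msgs F2 N t" and x': "x' \<in> msgs F2 N t"
      and code: "\<phi> x = \<phi> x'" and side: "restrict x (A i \<inter> N) = restrict x' (A i \<inter> N)"
    have Y_eq: "Y x (f p) = Y x' (f p)" if "p < card T" for p
    proof (rule eq_if_bit_blocks_eq[where u = "\<lambda>p. Y x (f p)" and v = "\<lambda>p. Y x' (f p)"])
      show "Y x (f p) < 2 ^ L" "Y x' (f p) < 2 ^ L"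
        using small bij_betwE[OF f] that by auto
      show "\<forall>n < card T * L. bit (Y x (f (n div L))) (n mod L) = bit (Y x' (f (n div L))) (n mod L)"
      proof (intro allI impI)
        fix n assume "n < card T * L"
        then have "(of_bool (bit (Y x (f (n div L))) (n mod L)) :: nat) =
            of_bool (bit (Y x' (f (n div L))) (n mod L))"
          using fun_cong[OF code, of n] by (simp add: \<phi>_def)
        then show "bit (Y x (f (n div L))) (n mod L) = bit (Y x' (f (n div L))) (n mod L)"
          by (simp only: of_bool_eq_iff)
      qed
    qed (fact that)
    have "\<forall>q \<in> T. Y x q = Y x' q"
    proof
      fix q assume "q \<in> T"
      then have "inv_into {0..<card T} f q < card T" "f (inv_into {0..<card T} f q) = q"
        using bij_betwE[OF bij_betw_inv_into[OF f]] bij_betw_inv_into_right[OF f] by auto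
      then show "Y x q = Y x' q"
        using Y_eq by metis
    qed
    then show "x i = x' i"
      by (rule dec[OF i x x' _ side])
  qed
qed

lemma beta_le_of_codes:
  fixes K C :: nat
  assumes codes: "\<And>t. t > 0 \<Longrightarrow> \<exists>F. field F \<and> finite (carrier F) \<and> is_index_code F A N t (K * t + C)"
  shows "beta A N \<le> K"
proof -
  define S where "S = {real r / real t | t r. t > 0 \<and>
      (\<exists>F :: nat ring. field F \<and> finite (carrier F) \<and> is_index_code F A N t r)}"
  have rate: "real (K * t + C) / real t \<in> S" if "t > 0" for t
    using codes[OF that] that unfolding S_def by blast
  have "bdd_below S"
    unfolding S_def by (rule bdd_belowI[of _ 0]) auto
  have "Inf S \<le> K + e" if "e > 0" for e :: real
  proof -
    define t where "t = nat \<lceil>C / e\<rceil> + 1"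
    have "t > 0" "C / e < t"
      unfolding t_def by linarith+
    then have "C / t \<le> e"
      using that by (simp add: field_simps)
    have "Inf S \<le> real (K * t + C) / real t"
      by (rule cInf_lower[OF rate[OF \<open>t > 0\<close>] \<open>bdd_below S\<close>])
    also have "\<dots> = K + C / t"
      using \<open>t > 0\<close> by (simp add: field_simps)
    finally show ?thesis
      using \<open>C / t \<le> e\<close> by linarith
  qed
  then show ?thesis
    unfolding beta_def S_def[symmetric] by (rule field_le_epsilon)
qed

lemma weighted_sum_less_power2:
  fixes w X :: "'c \<Rightarrow> nat"
  assumes "\<forall>c \<in> S. X c < 2 ^ t"
  shows "(\<Sum>c \<in> S. w c * X c) < 2 ^ (t + (\<Sum>c \<in> S. w c))"
proof -
  have "(\<Sum>c \<in> S. w c * X c) \<le> (\<Sum>c \<in> S. w c * 2 ^ t)"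
    using assms by (intro sum_mono mult_left_mono) (auto simp: less_imp_le)
  also have "\<dots> = (\<Sum>c \<in> S. w c) * 2 ^ t"
    by (simp add: sum_distrib_right)
  also have "\<dots> < 2 ^ (\<Sum>c \<in> S. w c) * 2 ^ t"
    by simp
  finally show ?thesis
    by (simp add: power_add mult.commute)
qed

definition row_transmission :: "nat set list \<Rightarrow> nat \<Rightarrow> nat \<Rightarrow> (nat \<Rightarrow> nat \<Rightarrow> nat) \<Rightarrow> nat" where
  "row_transmission rs t j x = (\<Sum>c \<in> rs ! j. generic_weight j c * bits_value t (x c))"

lemma decoding_rows_decode:
  assumes N: "finite N" and P: "partition_on N P"
    and rows: "\<forall>M \<in> P. length (R M) = k M \<and> decoding_rows A M (R M)"
    and i: "i \<in> N" and x: "x \<in> msgs F2 N t" and x': "x' \<in> msgs F2 N t"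
    and sums: "\<forall>M \<in> P. \<forall>j < k M. row_transmission (R M) t j x = row_transmission (R M) t j x'"
    and side: "restrict x (A i \<inter> N) = restrict x' (A i \<inter> N)"
  shows "x i = x' i"
proof -
  obtain M where M: "M \<in> P" "i \<in> M"
    using P i by (auto simp: partition_on_def)
  then have "M \<subseteq> N" and len: "length (R M) = k M" and dec: "decoding_rows A M (R M)"
    using P rows by (auto simp: partition_on_def)
  then obtain J where J: "mcm_gain (take J (R M)) (Bset A M i) i"
    using M(2) by (auto simp: decoding_rows_def)
  have "bits_value t (x i) = bits_value t (x' i)"
  proof (rule mcm_gain_decodes[OF _ M(2) _ J])
    show "finite M"
      using N \<open>M \<subseteq> N\<close> finite_subset by blast
    show "\<forall>r \<in> set (R M). r \<subseteq> M"
      using dec by (simp add: decoding_rows_def)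
    show "\<forall>j < length (R M). (\<Sum>c \<in> R M ! j. generic_weight j c * bits_value t (x c)) =
        (\<Sum>c \<in> R M ! j. generic_weight j c * bits_value t (x' c))"
      using sums M(1) len by (simp add: row_transmission_def)
    show "\<forall>c \<in> A i \<inter> M. bits_value t (x c) = bits_value t (x' c)"
    proof
      fix c assume "c \<in> A i \<inter> M"
      then have "c \<in> A i \<inter> N"
        using \<open>M \<subseteq> N\<close> by blast
      then show "bits_value t (x c) = bits_value t (x' c)"
        using fun_cong[OF side, of c] by simp
    qed
  qed
  moreover have "x i \<in> {..<t} \<rightarrow>\<^sub>E {0, 1}" "x' i \<in> {..<t} \<rightarrow>\<^sub>E {0, 1}"
    using PiE_mem[OF x[unfolded msgs_def] i] PiE_mem[OF x'[unfolded msgs_def] i] by simp_all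
  ultimately show "x i = x' i"
    using bits_value_inj by blast
qed

lemma index_code_of_decoding_rows:
  assumes N: "finite N" and P: "partition_on N P"
    and rows: "\<forall>M \<in> P. length (R M) = k M \<and> decoding_rows A M (R M)"
  shows "\<exists>C. \<forall>t. is_index_code F2 A N t ((\<Sum>M \<in> P. k M) * t + C)"
proof -
  have "finite P"
    using N P by (metis finite_UnionD partition_on_def)
  define T where "T = (SIGMA M:P. {..<k M})"
  have "finite T" "card T = (\<Sum>M \<in> P. k M)"
    using \<open>finite P\<close> by (simp_all add: T_def card_SigmaI)
  define W where "W = (\<Sum>(M, j) \<in> T. \<Sum>c \<in> R M ! j. generic_weight j c)"
  have "is_index_code F2 A N t (card T * (t + W))" for t
  proof (rule index_code_of_integer_transmissions[OF \<open>finite T\<close>,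
        where Y = "\<lambda>x (M, j). row_transmission (R M) t j x"])
    fix x and q :: "nat set \<times> nat" assume "q \<in> T"
    then obtain M j where q: "q = (M, j)" "(M, j) \<in> T"
      by (cases q) simp
    have "row_transmission (R M) t j x < 2 ^ (t + (\<Sum>c \<in> R M ! j. generic_weight j c))"
      unfolding row_transmission_def by (rule weighted_sum_less_power2) (simp add: bits_value_less)
    also have "\<dots> \<le> 2 ^ (t + W)"
    proof -
      have "(\<Sum>c \<in> R M ! j. generic_weight j c) \<le> W"
        unfolding W_def using \<open>finite T\<close> q(2)
          member_le_sum[of "(M, j)" T "\<lambda>(M, j). \<Sum>c \<in> R M ! j. generic_weight j c"] by simp
      then show ?thesis
        by (intro power_increasing) auto
    qed
    finally show "(case q of (M, j) \<Rightarrow> row_transmission (R M) t j x) < 2 ^ (t + W)"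
      by (simp add: q(1))
  next
    fix i x x' assume "i \<in> N" "x \<in> msgs F2 N t" "x' \<in> msgs F2 N t"
      "\<forall>q \<in> T. (case q of (M, j) \<Rightarrow> row_transmission (R M) t j x) =
               (case q of (M, j) \<Rightarrow> row_transmission (R M) t j x')"
      "restrict x (A i \<inter> N) = restrict x' (A i \<inter> N)"
    then show "x i = x' i"
      by (intro decoding_rows_decode[OF N P rows]) (auto simp: T_def)
  qed
  then show ?thesis
    using \<open>card T = (\<Sum>M \<in> P. k M)\<close> by (metis add_mult_distrib2)
qed

theorem theorem6:
  fixes m :: nat and A :: "nat \<Rightarrow> nat set" and P :: "nat set set" and k :: "nat set \<Rightarrow> nat"
  assumes "\<forall>i\<in>{1..m}. A i \<subseteq> {1..m} - {i}"
    and "partition_on {1..m} P"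
    and "\<forall>M\<in>P. umcd_output A M (k M)"
  shows "beta A {1..m} \<le> real (\<Sum>M\<in>P. k M)"
proof -
  have "\<exists>rs. length rs = k M \<and> decoding_rows A M rs" if "M \<in> P" for M
  proof -
    have "M \<subseteq> {1..m}"
      using assms(2) that by (auto simp: partition_on_def)
    then have "finite M"
      by (rule finite_subset) simp
    then show ?thesis
      using umcd_output_decoding_rows assms(3) that by blast
  qed
  then obtain R where "\<forall>M \<in> P. length (R M) = k M \<and> decoding_rows A M (R M)"
    by metis
  then obtain C where "\<forall>t. is_index_code F2 A {1..m} t ((\<Sum>M \<in> P. k M) * t + C)"
    using index_code_of_decoding_rows[OF _ assms(2)] by blast
  then show ?thesis
    using field_F2 by (intro beta_le_of_codes[where C = C]) auto
qed

end
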